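(* Let $L\ge1$, $k\ge1$ be integers with $k\mid L$, let $N$ be an $L$-bit integer, $a<N$ a positive integer with $\gcd(a,N)=1$, $r$ the order of $a$ modulo $N$, $\epsilon>0$, and let $p=\lceil\log_2(2+\frac{k}{2\epsilon})\rceil$, $l_k=(k-1)\frac Lk+1$, $t_k=2L+2-l_k+p$. Let $s_0\in\{0,1,\dots,r-1\}$ be such that $2^{l_k+1}\cdot\frac{s_0}{r}$ is not an integer, and let $m_k$ be a $t_k$-bit string with $$d_{t_k}\Big(m_k,\big(\tfrac{s_0}{r}\big)_{\{l_k,2L+1+p\}}\Big)<2^p.$$ Then $(m_k)_{[1,2]}=\big(\frac{s_0}{r}\big)_{\{l_k,l_k+1\}}$ and $\big|m_k-\big(\frac{s_0}{r}\big)_{\{l_k,2L+1+p\}}\big|<2^p$.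
   Context: Bit strings are identified with the binary integers they represent (most significant bit first). For a bit string $x=x_1\cdots x_n$, $x_{[i,j]}=x_i\cdots x_j$. For real $\omega$ with binary fractional expansion $0.b_1b_2\cdots$ (not ending in infinitely many 1's), $\omega_{\{i,j\}}=b_i\cdots b_j$. For two $t$-bit strings $x,y$, $d_t(x,y)=\min(|x-y|,2^t-|x-y|)$. *)

theory Defs
  imports "HOL-Number_Theory.Number_Theory"
begin

text \<open>Bits i..j (1-indexed, most significant first) of an n-bit string x, read as a binary integer.\<close>
definition bit_substr :: "nat \<Rightarrow> nat \<Rightarrow> nat \<Rightarrow> nat \<Rightarrow> nat" where
  "bit_substr n x i j = (x div 2 ^ (n - j)) mod 2 ^ (j + 1 - i)"

text \<open>Fractional bits b_i..b_j of a nonnegative real w = 0.b1 b2 ... (expansion not ending in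
  infinitely many 1s), read as a binary integer.\<close>
definition frac_bits :: "real \<Rightarrow> nat \<Rightarrow> nat \<Rightarrow> nat" where
  "frac_bits w i j = nat \<lfloor>w * 2 ^ j\<rfloor> mod 2 ^ (j + 1 - i)"

definition dist_t :: "nat \<Rightarrow> nat \<Rightarrow> nat \<Rightarrow> int" where
  "dist_t t x y = min \<bar>int x - int y\<bar> (2 ^ t - \<bar>int x - int y\<bar>)"

end

theory Submission
  imports Defs
begin

text \<open>Let x = s0/r, J = 2L+1+p and e = J - (lk+1) = tk - 2. The string X = x_{lk..J}
  splits as X = q 2^e + u with q = x_{lk..lk+1} and u = floor (2^e frac (2^(lk+1) x)).
  Since 2^(lk+1) x = 2^(lk+1) s0 / r is not an integer, its fractional part lies in
  [1/r, 1 - 1/r]; as r = ord N a < N < 2^L and L + p \<le> e, u is at distance at least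
  2^e/r \<ge> 2^p from both 0 and 2^e. Hence a tk-bit string within cyclic distance 2^p of X
  neither wraps around modulo 2^tk nor crosses a multiple of 2^e: its ordinary distance to X
  is below 2^p, and its two leading bits are q.\<close>

lemma frac_bits_of_nat_div:
  "frac_bits (real s / real r) i j = s * 2 ^ j div r mod 2 ^ (j + 1 - i)"
proof -
  have "\<lfloor>real s / real r * 2 ^ j\<rfloor> = int (s * 2 ^ j div r)"
    using floor_divide_of_nat_eq[of "s * 2 ^ j" r] by simp
  then show ?thesis
    unfolding frac_bits_def by simp
qed

lemma frac_bits_div_pow2:
  assumes "0 \<le> w" and "i \<le> j' + 1" and "j' \<le> j"
  shows "frac_bits w i j div 2 ^ (j - j') = frac_bits w i j'"
proof -
  have "\<lfloor>w * 2 ^ j\<rfloor> div 2 ^ (j - j') = \<lfloor>w * 2 ^ j'\<rfloor>"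
  proof -
    have "(2::real) ^ j = 2 ^ j' * 2 ^ (j - j')"
      using assms(3) by (simp flip: power_add)
    then have "w * 2 ^ j / real_of_int (2 ^ (j - j')) = w * 2 ^ j'"
      by simp
    then show ?thesis
      using floor_divide_real_eq_div[of "2 ^ (j - j')" "w * 2 ^ j"] by simp
  qed
  moreover have "nat (\<lfloor>w * 2 ^ j\<rfloor> div 2 ^ (j - j')) = nat \<lfloor>w * 2 ^ j\<rfloor> div 2 ^ (j - j')"
    using assms(1) by (simp add: nat_div_distrib nat_power_eq)
  ultimately have "nat \<lfloor>w * 2 ^ j\<rfloor> div 2 ^ (j - j') = nat \<lfloor>w * 2 ^ j'\<rfloor>"
    by simp
  moreover have "j + 1 - i - (j - j') = j' + 1 - i"
    using assms by simp
  ultimately show ?thesis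
    unfolding frac_bits_def
    by (metis drop_bit_eq_div take_bit_eq_mod drop_bit_take_bit)
qed

lemma abs_diff_less_if_dist_t_less:
  assumes "m < 2 ^ t" and "P \<le> X" and "X + P \<le> 2 ^ t" and "dist_t t m X < int P"
  shows "\<bar>int m - int X\<bar> < int P"
proof -
  have "int m < int (2 ^ t)" and "int X + int P \<le> int (2 ^ t)" and "int P \<le> int X"
    using assms(1-3) by (simp_all only: of_nat_less_iff of_nat_le_iff flip: of_nat_add)
  moreover have "int (2 ^ t) = 2 ^ t"
    by simp
  ultimately have "\<bar>int m - int X\<bar> \<le> 2 ^ t - int P"
    by arith
  then show ?thesis
    using assms(4) unfolding dist_t_def by linarith
qed

lemma div_eq_if_abs_diff_less:
  fixes m X D P :: nat
  assumes "\<bar>int m - int X\<bar> < int P" and "P \<le> X mod D" and "X mod D + P \<le> D"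
  shows "m div D = X div D"
proof (rule div_nat_eqI)
  have X: "int X = int D * int (X div D) + int (X mod D)"
    by (simp flip: of_nat_mult of_nat_add)
  then have "int (D * (X div D)) \<le> int m"
    using assms(1,2) by simp
  then show "D * (X div D) \<le> m"
    by (simp only: of_nat_le_iff)
  have "int m < int (D * Suc (X div D))"
    using assms(1,3) X by simp
  then show "m < D * Suc (X div D)"
    by (simp only: of_nat_less_iff)
qed

lemma div_eq_and_abs_diff_less_if_dist_t_less:
  fixes m X D P t :: nat
  assumes "m < 2 ^ t" and "X < 2 ^ t" and "D dvd 2 ^ t"
    and "P \<le> X mod D" and "X mod D + P \<le> D" and "dist_t t m X < int P"
  shows "m div D = X div D \<and> \<bar>int m - int X\<bar> < int P"
proof -
  obtain n where n: "2 ^ t = D * n"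
    using assms(3) ..
  have "X div D < n"
    using assms(2) n by (simp add: less_mult_imp_div_less mult.commute)
  have "X + P \<le> D * (X div D) + D"
    using assms(5) mult_div_mod_eq[of D X] by linarith
  also have "\<dots> = D * Suc (X div D)"
    by simp
  also have "\<dots> \<le> 2 ^ t"
    unfolding n using \<open>X div D < n\<close> by (intro mult_le_mono2) simp
  finally have "X + P \<le> 2 ^ t" .
  moreover have "P \<le> X"
    using assms(4) mod_less_eq_dividend order.trans by blast
  ultimately have "\<bar>int m - int X\<bar> < int P"
    using assms(1,6) by (intro abs_diff_less_if_dist_t_less)
  with assms(4,5) show ?thesis
    using div_eq_if_abs_diff_less by blast
qed

lemma mult_div_mod_eq_mod_mult_div:
  fixes M D r :: nat
  assumes "0 < r"
  shows "M * D div r mod D = M mod r * D div r"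
proof -
  have "M * D = M mod r * D + r * (M div r * D)"
    by (metis add_mult_distrib mult.assoc mult.commute mod_div_mult_eq)
  then have "M * D div r = M mod r * D div r + M div r * D"
    using assms by simp
  moreover have "M mod r * D div r < D" if "0 < D"
    using assms that by (simp add: div_less_iff_less_mult)
  ultimately show ?thesis
    by (cases "D = 0") simp_all
qed

lemma mod_mult_div_bounds:
  fixes M D r P :: nat
  assumes "0 < r" and "\<not> r dvd M" and "r * P \<le> D"
  shows "P \<le> M mod r * D div r" and "M mod r * D div r + P \<le> D"
proof -
  have c: "0 < M mod r" "M mod r < r"
    using assms(1,2) by (auto intro: Nat.gr0I simp: mod_0_imp_dvd)
  have "P \<le> D div r"
    using assms(1,3) by (simp add: less_eq_div_iff_mult_less_eq mult.commute)
  also have "\<dots> \<le> M mod r * D div r"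
    using c by (intro div_le_mono) simp
  finally show "P \<le> M mod r * D div r" .
  have "r * (M mod r * D div r) \<le> M mod r * D"
    by (simp add: mult.commute)
  also have "\<dots> \<le> (r - 1) * D"
    using c by (intro mult_le_mono1) simp
  also have "\<dots> = r * D - D"
    by (simp add: diff_mult_distrib)
  finally have "r * (M mod r * D div r) \<le> r * D - D" .
  moreover have "D \<le> r * D"
    using assms(1) by simp
  ultimately have "r * (M mod r * D div r) + r * P \<le> r * D"
    using assms(3) by linarith
  then show "M mod r * D div r + P \<le> D"
    using assms(1) by (simp flip: add_mult_distrib2)
qed

lemma not_dvd_if_not_Ints:
  fixes s r n :: nat
  assumes "2 ^ n * (real s / real r) \<notin> \<int>"
  shows "\<not> r dvd s * 2 ^ n"
proof
  assume "r dvd s * 2 ^ n"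
  then obtain q where q: "s * 2 ^ n = r * q" ..
  have "r \<noteq> 0"
    using assms by (intro notI) simp
  moreover have "real s * 2 ^ n = real r * real q"
    using arg_cong[OF q, of real] by simp
  ultimately have "2 ^ n * (real s / real r) = real q"
    by (simp add: field_simps)
  then show False
    using assms by simp
qed

lemma ord_less_modulus:
  fixes a N :: nat
  assumes "coprime a N" and "1 < N"
  shows "ord N a < N"
proof -
  have "ord N a \<le> totient N"
    using assms by (intro dvd_imp_le order_divides_totient) (simp_all add: coprime_commute)
  also have "\<dots> < N"
    using assms(2) by (rule totient_less)
  finally show ?thesis .
qed

lemma pred_mult_div_less:
  fixes k L :: nat
  assumes "0 < L"
  shows "(k - 1) * (L div k) < L"
proof (cases "L div k = 0")
  case False
  then have "0 < k"
    by (cases k) simp_all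
  with False have "(k - 1) * (L div k) < k * (L div k)"
    by (simp add: diff_mult_distrib)
  also have "\<dots> \<le> L"
    by simp
  finally show ?thesis .
qed (use assms in simp)

theorem lemma3:
  fixes L k N a r s0 m p lk tk :: nat and \<epsilon> :: real
  assumes "L \<ge> 1" and "k \<ge> 1" and "k dvd L"
    and "2 ^ (L - 1) \<le> N" and "N < 2 ^ L"
    and "0 < a" and "a < N" and "coprime a N"
    and "r = ord N a"
    and "\<epsilon> > 0"
    and "p = nat \<lceil>log 2 (2 + real k / (2 * \<epsilon>))\<rceil>"
    and "lk = (k - 1) * (L div k) + 1"
    and "tk = 2 * L + 2 - lk + p"
    and "s0 < r"
    and "(2::real) ^ (lk + 1) * (real s0 / real r) \<notin> \<int>"
    and "m < 2 ^ tk"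
    and "dist_t tk m (frac_bits (real s0 / real r) lk (2 * L + 1 + p)) < 2 ^ p"
  shows "bit_substr tk m 1 2 = frac_bits (real s0 / real r) lk (lk + 1)
         \<and> \<bar>int m - int (frac_bits (real s0 / real r) lk (2 * L + 1 + p))\<bar> < 2 ^ p"
proof -
  define e where "e = 2 * L - lk + p"
  define D :: nat where "D = 2 ^ e"
  define M where "M = s0 * 2 ^ (lk + 1)"
  define X where "X = frac_bits (real s0 / real r) lk (2 * L + 1 + p)"
  have r_pos: "0 < r"
    using assms(14) by simp
  have "lk \<le> L"
    using pred_mult_div_less[of L k] assms(1,12) by simp
  then have tk: "tk = e + 2" and J: "2 * L + 1 + p = lk + 1 + e"
    using assms(13) unfolding e_def by simp_all
  have "r * 2 ^ p \<le> 2 ^ L * 2 ^ p"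
    using ord_less_modulus[OF assms(8)] assms(5-7,9) by simp
  also have "\<dots> \<le> D"
    unfolding D_def e_def using \<open>lk \<le> L\<close> by (simp flip: power_add)
  finally have "r * 2 ^ p \<le> D" .
  have X_eq: "X = M * D div r mod (4 * D)"
    unfolding X_def frac_bits_of_nat_div J M_def D_def by (simp add: power_add mult_ac)
  then have "X mod D = M mod r * D div r"
    using r_pos by (simp add: mod_mod_cancel mult_div_mod_eq_mod_mult_div)
  then have "2 ^ p \<le> X mod D" and "X mod D + 2 ^ p \<le> D"
    using mod_mult_div_bounds[OF r_pos _ \<open>r * 2 ^ p \<le> D\<close>] not_dvd_if_not_Ints[OF assms(15)]
    unfolding M_def by simp_all
  moreover have "X < 2 ^ tk" and "D dvd 2 ^ tk"
    unfolding X_eq tk D_def by (simp_all add: power_add)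
  ultimately have "m div D = X div D \<and> \<bar>int m - int X\<bar> < int (2 ^ p)"
    using assms(16,17) unfolding X_def
    by (intro div_eq_and_abs_diff_less_if_dist_t_less) simp_all
  moreover have "bit_substr tk m 1 2 = m div D mod 4"
    unfolding bit_substr_def tk D_def by simp
  moreover have "frac_bits (real s0 / real r) lk (lk + 1) = X div D mod 4"
    using frac_bits_div_pow2[of "real s0 / real r" lk "lk + 1" "2 * L + 1 + p"]
    unfolding X_def D_def J by (simp add: frac_bits_def)
  ultimately show ?thesis
    unfolding X_def by simp
qed

end
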